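(* Let $c\in(-1,0]$ and let $x,y,z\in[c,1]$ satisfy $x+yz\ge0$, $y+xz\ge0$, $z+xy\ge0$. Then $$2-x^2-y^2+x+yz+y+xz+z+xy\ge 1+c.$$ *)

theory Defs
  imports Complex_Main
begin

end

theory Submission
  imports Defs
begin

text \<open>Write \<open>E = 2 - x\<^sup>2 - y\<^sup>2 + (x + y z) + (y + x z) + (z + x y)\<close>. The sign of \<open>(x, y)\<close>
  decides the estimate. If \<open>x, y \<ge> 0\<close>, then \<open>x\<^sup>2 \<le> x\<close>, \<open>y\<^sup>2 \<le> y\<close> and \<open>z \<ge> c\<close> leave
  \<open>E \<ge> 1 + c + (1 - x)(1 - y)\<close>. If \<open>x, y \<le> 0\<close>, then \<open>x\<^sup>2, y\<^sup>2 \<le> c\<^sup>2\<close> give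
  \<open>E \<ge> 2 - 2c\<^sup>2 = 1 + c + (1 + c)(1 - 2c)\<close>. If exactly one of them, say \<open>x\<close>, is negative,
  then \<open>x + y z \<ge> 0\<close> forces \<open>z > 0\<close>, and \<open>E \<ge> 1 + x y \<ge> 1 + x \<ge> 1 + c\<close>.\<close>

lemma lower_bound_nonneg_xy:
  fixes c x y z :: real
  assumes "-1 \<le> c" and "x \<in> {0..1}" and "y \<in> {0..1}" and "c \<le> z"
  shows "2 - x^2 - y^2 + x + y * z + y + x * z + z + x * y \<ge> 1 + c"
proof -
  have "x^2 \<le> x" "y^2 \<le> y"
    using assms(2,3) by (simp_all add: power2_eq_square mult_left_le)
  moreover have "c * (1 + x + y) \<le> z * (1 + x + y)"
    using assms by (intro mult_right_mono) auto
  moreover have "- (x + y) \<le> c * (x + y)"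
    using assms by (metis atLeastAtMost_iff add_nonneg_nonneg mult_minus1 mult_right_mono)
  moreover have "0 \<le> (1 - x) * (1 - y)"
    using assms(2,3) by simp
  ultimately show ?thesis
    by (simp add: algebra_simps)
qed

lemma lower_bound_nonpos_xy:
  fixes c x y z :: real
  assumes "-1 \<le> c" and "c \<le> 0" and "x \<in> {c..0}" and "y \<in> {c..0}"
    and "x + y * z \<ge> 0" and "y + x * z \<ge> 0" and "z + x * y \<ge> 0"
  shows "2 - x^2 - y^2 + x + y * z + y + x * z + z + x * y \<ge> 1 + c"
proof -
  have "x^2 \<le> c^2" "y^2 \<le> c^2"
    using assms(3,4) by (auto simp flip: abs_le_square_iff)
  moreover have "0 \<le> (1 + c) * (1 - 2 * c)"
    using assms(1,2) by simp
  ultimately show ?thesis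
    using assms(5-7) by (simp add: algebra_simps power2_eq_square)
qed

lemma lower_bound_neg_x:
  fixes c x y z :: real
  assumes "-1 \<le> c" and "c \<le> x" and "x < 0" and "y \<in> {0..1}" and "x + y * z \<ge> 0"
  shows "2 - x^2 - y^2 + x + y * z + y + x * z + z + x * y \<ge> 1 + c"
proof -
  have "0 < y * z"
    using assms(3,5) by linarith
  then have "0 < z"
    using assms(4) by (simp add: zero_less_mult_iff)
  then have "0 \<le> z * (1 + x)"
    using assms(1,2) by simp
  moreover have "x^2 \<le> 1"
    using assms(1-3) by (simp add: abs_square_le_1)
  moreover have "y^2 \<le> y"
    using assms(4) by (simp add: power2_eq_square mult_left_le)
  moreover have "x \<le> x * y"
    using assms(3,4) by (simp add: mult_le_cancel_left1)
  ultimately show ?thesis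
    using assms(2,5) by (simp add: algebra_simps)
qed

theorem proposition3p1:
  fixes c x y z :: real
  assumes "-1 < c" and "c \<le> 0"
    and "x \<in> {c..1}" and "y \<in> {c..1}" and "z \<in> {c..1}"
    and "x + y * z \<ge> 0" and "y + x * z \<ge> 0" and "z + x * y \<ge> 0"
  shows "2 - x^2 - y^2 + x + y * z + y + x * z + z + x * y \<ge> 1 + c"
proof (cases "x < 0"; cases "y < 0")
  assume "x < 0" "y < 0"
  then show ?thesis
    using assms by (intro lower_bound_nonpos_xy) auto
next
  assume "x < 0" "\<not> y < 0"
  then show ?thesis
    using assms by (intro lower_bound_neg_x) auto
next
  assume "\<not> x < 0" "y < 0"
  then have "2 - y^2 - x^2 + y + x * z + x + y * z + z + y * x \<ge> 1 + c"
    using assms by (intro lower_bound_neg_x) auto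
  then show ?thesis
    by (simp add: algebra_simps)
next
  assume "\<not> x < 0" "\<not> y < 0"
  then show ?thesis
    using assms by (intro lower_bound_nonneg_xy) auto
qed

end
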